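(* Let $\mathcal K$ be a 2-category which admits Eilenberg–Moore constructions for monads and in which idempotent 2-cells split. Let $(V,\psi):(t,\mu,\eta)\to(t',\mu',\eta')$ be a 1-cell in $\mathrm{EM}^w(\mathcal K)$ and let $Vv\overset{\pi}{\Rightarrow}\widetilde V\overset{\iota}{\Rightarrow}Vv$ be a chosen splitting of the idempotent 2-cell $Vv\epsilon\ast\psi v\ast\eta'Vv$ (so $\widetilde V:J(t)\to k'$, $\pi\ast\iota=\widetilde V$, $\iota\ast\pi=Vv\epsilon\ast\psi v\ast\eta'Vv$). Put $\widetilde\psi:=\pi\ast Vv\epsilon\ast\psi v\ast t'\iota:t'\widetilde V\Rightarrow\widetilde V$. Then $(\widetilde V,\widetilde\psi)$ is a 1-cell $IJ(t)\to t'$ in $\mathrm{EM}(\mathcal K)$, i.e. $\widetilde\psi\ast t'\widetilde\psi=\widetilde\psi\ast\mu'\widetilde V$ and $\widetilde\psi\ast\eta'\widetilde V=\widetilde V$.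
   Context: Conventions in a 2-category $\mathcal K$: horizontal composition and whiskering by juxtaposition in the order of functor composition; identity 1-cell of $k$ written $k$, identity 2-cell of $V$ written $V$; vertical composition $\ast$ with $\alpha\ast\beta$ meaning $\beta$ then $\alpha$. A monad $(t,\mu,\eta)$ on $k$: $t:k\to k$, $\mu:tt\Rightarrow t$, $\eta:k\Rightarrow t$, associative and unital. A 1-cell $(t,\mu,\eta)\to(t',\mu',\eta')$ in $\mathrm{EM}^w(\mathcal K)$ ($t$ on $k$, $t'$ on $k'$) is a pair $(V,\psi)$, $V:k\to k'$, $\psi:t'V\Rightarrow Vt$, with $V\mu\ast\psi t\ast t'\psi=\psi\ast\mu'V$. In the Lack–Street 2-category $\mathrm{EM}(\mathcal K)$, a 1-cell from the identity monad $I(l)=(l,l,l)$ on a 0-cell $l$ to $(t',\mu',\eta')$ is a pair $(A,\alpha)$, $A:l\to k'$, $\alpha:t'A\Rightarrow A$ with $\alpha\ast t'\alpha=\alpha\ast\mu'A$ and $\alpha\ast\eta'A=A$. $\mathcal K$ admits Eilenberg–Moore constructions for monads: the inclusion 2-functor $I:\mathcal K\to\mathrm{EM}(\mathcal K)$ has a right 2-adjoint $J$; each monad $(t,\mu,\eta)$ on $k$ determines an adjunction $f\dashv v$, $f:k\to J(t)$, $v:J(t)\to k$, unit $\eta:k\Rightarrow vf$, counit $\epsilon:fv\Rightarrow J(t)$, with $t=vf$, $\mu=v\epsilon f$; for $t'$ the data are $f',v',\eta',\epsilon'$. Idempotent 2-cells split: for every $e:X\Rightarrow X$ with $e\ast e=e$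 there are $\widehat X$, $\iota:\widehat X\Rightarrow X$, $\pi:X\Rightarrow\widehat X$ with $\pi\ast\iota=\widehat X$ and $\iota\ast\pi=e$. The 2-cell $Vv\epsilon\ast\psi v\ast\eta'Vv$ is idempotent. *)

theory Defs
  imports Main
begin

text \<open>Conventions: a 1-cell f has source sr f and target tg f (f : sr f \<rightarrow> tg f).
  c1 g f is the composite "g after f" (defined when tg f = sr g), written gf in the paper.
  A 2-cell a : f \<Rightarrow> f' has dm a = f and cd a = f'.
  vc b a is vertical composite b * a ("a then b").
  hc b a is horizontal composite: for a : f \<Rightarrow> f', b : g \<Rightarrow> g' it is gf \<Rightarrow> g'f'.
  i1 x is the identity 1-cell of x, i2 f the identity 2-cell of f.\<close>

record ('o, 'a, 'c) twocat =
  Ob :: "'o set"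
  Ar :: "'a set"
  Ce :: "'c set"
  sr :: "'a \<Rightarrow> 'o"
  tg :: "'a \<Rightarrow> 'o"
  dm :: "'c \<Rightarrow> 'a"
  cd :: "'c \<Rightarrow> 'a"
  i1 :: "'o \<Rightarrow> 'a"
  i2 :: "'a \<Rightarrow> 'c"
  c1 :: "'a \<Rightarrow> 'a \<Rightarrow> 'a"
  hc :: "'c \<Rightarrow> 'c \<Rightarrow> 'c"
  vc :: "'c \<Rightarrow> 'c \<Rightarrow> 'c"

definition two_category :: "('o, 'a, 'c, 'm) twocat_scheme \<Rightarrow> bool" where
  "two_category C \<longleftrightarrow>
    (\<forall>f\<in>Ar C. sr C f \<in> Ob C \<and> tg C f \<in> Ob C)
  \<and> (\<forall>a\<in>Ce C. dm C a \<in> Ar C \<and> cd C a \<in> Ar C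
        \<and> sr C (dm C a) = sr C (cd C a) \<and> tg C (dm C a) = tg C (cd C a))
  \<and> (\<forall>x\<in>Ob C. i1 C x \<in> Ar C \<and> sr C (i1 C x) = x \<and> tg C (i1 C x) = x)
  \<and> (\<forall>f\<in>Ar C. \<forall>g\<in>Ar C. tg C f = sr C g \<longrightarrow>
        c1 C g f \<in> Ar C \<and> sr C (c1 C g f) = sr C f \<and> tg C (c1 C g f) = tg C g)
  \<and> (\<forall>f\<in>Ar C. \<forall>g\<in>Ar C. \<forall>h\<in>Ar C. tg C f = sr C g \<longrightarrow> tg C g = sr C h \<longrightarrow>
        c1 C h (c1 C g f) = c1 C (c1 C h g) f)
  \<and> (\<forall>f\<in>Ar C. c1 C f (i1 C (sr C f)) = f \<and> c1 C (i1 C (tg C f)) f = f)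
  \<and> (\<forall>f\<in>Ar C. i2 C f \<in> Ce C \<and> dm C (i2 C f) = f \<and> cd C (i2 C f) = f)
  \<and> (\<forall>a\<in>Ce C. \<forall>b\<in>Ce C. dm C b = cd C a \<longrightarrow>
        vc C b a \<in> Ce C \<and> dm C (vc C b a) = dm C a \<and> cd C (vc C b a) = cd C b)
  \<and> (\<forall>a\<in>Ce C. \<forall>b\<in>Ce C. \<forall>c\<in>Ce C. dm C b = cd C a \<longrightarrow> dm C c = cd C b \<longrightarrow>
        vc C c (vc C b a) = vc C (vc C c b) a)
  \<and> (\<forall>a\<in>Ce C. vc C a (i2 C (dm C a)) = a \<and> vc C (i2 C (cd C a)) a = a)
  \<and> (\<forall>a\<in>Ce C. \<forall>b\<in>Ce C. tg C (dm C a) = sr C (dm C b) \<longrightarrow>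
        hc C b a \<in> Ce C \<and> dm C (hc C b a) = c1 C (dm C b) (dm C a)
        \<and> cd C (hc C b a) = c1 C (cd C b) (cd C a))
  \<and> (\<forall>a\<in>Ce C. \<forall>b\<in>Ce C. \<forall>c\<in>Ce C. tg C (dm C a) = sr C (dm C b) \<longrightarrow>
        tg C (dm C b) = sr C (dm C c) \<longrightarrow> hc C c (hc C b a) = hc C (hc C c b) a)
  \<and> (\<forall>a\<in>Ce C. hc C a (i2 C (i1 C (sr C (dm C a)))) = a
        \<and> hc C (i2 C (i1 C (tg C (dm C a)))) a = a)
  \<and> (\<forall>f\<in>Ar C. \<forall>g\<in>Ar C. tg C f = sr C g \<longrightarrow> hc C (i2 C g) (i2 C f) = i2 C (c1 C g f))
  \<and> (\<forall>a\<in>Ce C. \<forall>a'\<in>Ce C. \<forall>b\<in>Ce C. \<forall>b'\<in>Ce C.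
        dm C a' = cd C a \<longrightarrow> dm C b' = cd C b \<longrightarrow> tg C (dm C a) = sr C (dm C b) \<longrightarrow>
        hc C (vc C b' b) (vc C a' a) = vc C (hc C b' a') (hc C b a))"

text \<open>Whiskering: lw C g a is "g a", rw C a f is "a f".\<close>
definition lw :: "('o, 'a, 'c, 'm) twocat_scheme \<Rightarrow> 'a \<Rightarrow> 'c \<Rightarrow> 'c" where
  "lw C g a = hc C (i2 C g) a"
definition rw :: "('o, 'a, 'c, 'm) twocat_scheme \<Rightarrow> 'c \<Rightarrow> 'a \<Rightarrow> 'c" where
  "rw C a f = hc C a (i2 C f)"

definition hom1 :: "('o, 'a, 'c, 'm) twocat_scheme \<Rightarrow> 'a \<Rightarrow> 'o \<Rightarrow> 'o \<Rightarrow> bool" where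
  "hom1 C f x y \<longleftrightarrow> f \<in> Ar C \<and> sr C f = x \<and> tg C f = y"
definition hom2 :: "('o, 'a, 'c, 'm) twocat_scheme \<Rightarrow> 'c \<Rightarrow> 'a \<Rightarrow> 'a \<Rightarrow> bool" where
  "hom2 C a f g \<longleftrightarrow> a \<in> Ce C \<and> dm C a = f \<and> cd C a = g"

definition is_monad :: "('o, 'a, 'c, 'm) twocat_scheme \<Rightarrow> 'o \<Rightarrow> 'a \<Rightarrow> 'c \<Rightarrow> 'c \<Rightarrow> bool" where
  "is_monad C k t \<mu> \<eta> \<longleftrightarrow> k \<in> Ob C \<and> hom1 C t k k
    \<and> hom2 C \<mu> (c1 C t t) t \<and> hom2 C \<eta> (i1 C k) t
    \<and> vc C \<mu> (lw C t \<mu>) = vc C \<mu> (rw C \<mu> t)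
    \<and> vc C \<mu> (rw C \<eta> t) = i2 C t \<and> vc C \<mu> (lw C t \<eta>) = i2 C t"

definition EMw_1cell ::
  "('o, 'a, 'c, 'm) twocat_scheme \<Rightarrow> 'o \<Rightarrow> 'a \<Rightarrow> 'c \<Rightarrow> 'c \<Rightarrow> 'o \<Rightarrow> 'a \<Rightarrow> 'c \<Rightarrow> 'c
     \<Rightarrow> 'a \<Rightarrow> 'c \<Rightarrow> bool" where
  "EMw_1cell C k t \<mu> \<eta> k' t' \<mu>' \<eta>' V \<psi> \<longleftrightarrow>
     is_monad C k t \<mu> \<eta> \<and> is_monad C k' t' \<mu>' \<eta>'
   \<and> hom1 C V k k' \<and> hom2 C \<psi> (c1 C t' V) (c1 C V t)
   \<and> vc C (lw C V \<mu>) (vc C (rw C \<psi> t) (lw C t' \<psi>)) = vc C \<psi> (rw C \<mu>' V)"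

text \<open>(A, alpha) : I(l) \<rightarrow> (t,mu,eta) in the Lack--Street 2-category EM(K)
  (equivalently, a t-algebra in K(l,k)).\<close>
definition EM_1cell_from_id ::
  "('o, 'a, 'c, 'm) twocat_scheme \<Rightarrow> 'o \<Rightarrow> 'o \<Rightarrow> 'a \<Rightarrow> 'c \<Rightarrow> 'c \<Rightarrow> 'a \<Rightarrow> 'c \<Rightarrow> bool" where
  "EM_1cell_from_id C l k t \<mu> \<eta> A \<alpha> \<longleftrightarrow>
     l \<in> Ob C \<and> is_monad C k t \<mu> \<eta> \<and> hom1 C A l k \<and> hom2 C \<alpha> (c1 C t A) A
   \<and> vc C \<alpha> (lw C t \<alpha>) = vc C \<alpha> (rw C \<mu> A)
   \<and> vc C \<alpha> (rw C \<eta> A) = i2 C A"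

text \<open>(E, v, a) is an Eilenberg--Moore object of the monad: a universal t-algebra,
  i.e. for every object l, composition with (v,a) is an isomorphism from the
  hom-category K(l,E) to the category of 1-cells I(l) \<rightarrow> t in EM(K)
  (t-algebras in K(l,k) with their morphisms). This is the value J(t) of the
  right 2-adjoint J of I with its counit.\<close>
definition is_EM_object ::
  "('o, 'a, 'c, 'm) twocat_scheme \<Rightarrow> 'o \<Rightarrow> 'a \<Rightarrow> 'c \<Rightarrow> 'c \<Rightarrow> 'o \<Rightarrow> 'a \<Rightarrow> 'c \<Rightarrow> bool" where
  "is_EM_object C k t \<mu> \<eta> E v a \<longleftrightarrow>
     EM_1cell_from_id C E k t \<mu> \<eta> v a
   \<and> (\<forall>l\<in>Ob C. \<forall>A \<alpha>. EM_1cell_from_id C l k t \<mu> \<eta> A \<alpha> \<longrightarrow>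
        (\<exists>!B. hom1 C B l E \<and> c1 C v B = A \<and> rw C a B = \<alpha>))
   \<and> (\<forall>l\<in>Ob C. \<forall>B B' \<sigma>. hom1 C B l E \<longrightarrow> hom1 C B' l E \<longrightarrow>
        hom2 C \<sigma> (c1 C v B) (c1 C v B') \<longrightarrow>
        vc C \<sigma> (rw C a B) = vc C (rw C a B') (lw C t \<sigma>) \<longrightarrow>
        (\<exists>!\<tau>. hom2 C \<tau> B B' \<and> lw C v \<tau> = \<sigma>))"

text \<open>The adjunction f -| v : J(t) \<rightarrow> k determined by the EM object, with unit eta,
  counit eps, t = vf, mu = v eps f, and the algebra structure of v being v eps.\<close>
definition EM_data ::
  "('o, 'a, 'c, 'm) twocat_scheme \<Rightarrow> 'o \<Rightarrow> 'a \<Rightarrow> 'c \<Rightarrow> 'c \<Rightarrow> 'o \<Rightarrow> 'a \<Rightarrow> 'a \<Rightarrow> 'c \<Rightarrow> bool" where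
  "EM_data C k t \<mu> \<eta> E f v \<epsilon> \<longleftrightarrow>
     is_EM_object C k t \<mu> \<eta> E v (lw C v \<epsilon>)
   \<and> hom1 C f k E \<and> hom1 C v E k \<and> hom2 C \<epsilon> (c1 C f v) (i1 C E)
   \<and> c1 C v f = t \<and> \<mu> = lw C v (rw C \<epsilon> f)
   \<and> vc C (rw C \<epsilon> f) (lw C f \<eta>) = i2 C f
   \<and> vc C (lw C v \<epsilon>) (rw C \<eta> v) = i2 C v"

definition admits_EM :: "('o, 'a, 'c, 'm) twocat_scheme \<Rightarrow> bool" where
  "admits_EM C \<longleftrightarrow> (\<forall>k t \<mu> \<eta>. is_monad C k t \<mu> \<eta> \<longrightarrow> (\<exists>E f v \<epsilon>. EM_data C k t \<mu> \<eta> E f v \<epsilon>))"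

definition splits_idempotent :: "('o, 'a, 'c, 'm) twocat_scheme \<Rightarrow> 'c \<Rightarrow> 'a \<Rightarrow> 'c \<Rightarrow> 'c \<Rightarrow> bool" where
  "splits_idempotent C e Xh \<iota> \<pi> \<longleftrightarrow>
     Xh \<in> Ar C \<and> hom2 C \<iota> Xh (dm C e) \<and> hom2 C \<pi> (dm C e) Xh
   \<and> vc C \<pi> \<iota> = i2 C Xh \<and> vc C \<iota> \<pi> = e"

definition idempotents_split :: "('o, 'a, 'c, 'm) twocat_scheme \<Rightarrow> bool" where
  "idempotents_split C \<longleftrightarrow> (\<forall>e\<in>Ce C. dm C e = cd C e \<longrightarrow> vc C e e = e \<longrightarrow>
      (\<exists>Xh \<iota> \<pi>. splits_idempotent C e Xh \<iota> \<pi>))"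

end

theory Submission
  imports Defs
begin

text \<open>Since v carries the t-algebra structure v\<epsilon> and (V, \<psi>) is a morphism of monads in the weak
  sense, \<theta> = Vv\<epsilon> * \<psi>v is a t'-action on Vv that is associative but in general not unital:
  its "unit" \<theta> * \<eta>'Vv is only idempotent. Restricting an associative action to the retract
  splitting its unit idempotent gives an honest algebra, as in the idempotent completion of a
  category of non-unital algebras.\<close>

locale two_cat =
  fixes C :: "('o, 'a, 'c, 'm) twocat_scheme"
  assumes two_category: "two_category C"
begin

lemma arrow_boundary: "f \<in> Ar C \<Longrightarrow> sr C f \<in> Ob C \<and> tg C f \<in> Ob C"
  using two_category unfolding two_category_def by (elim conjE) blast

lemma cell_boundary:
  "a \<in> Ce C \<Longrightarrow> dm C a \<in> Ar C \<and> cd C a \<in> Ar C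
    \<and> sr C (dm C a) = sr C (cd C a) \<and> tg C (dm C a) = tg C (cd C a)"
  using two_category unfolding two_category_def by (elim conjE) blast

lemma c1_typing:
  "f \<in> Ar C \<Longrightarrow> g \<in> Ar C \<Longrightarrow> tg C f = sr C g \<Longrightarrow>
    c1 C g f \<in> Ar C \<and> sr C (c1 C g f) = sr C f \<and> tg C (c1 C g f) = tg C g"
  using two_category unfolding two_category_def by (elim conjE) blast

lemma c1_assoc [simp]:
  "f \<in> Ar C \<Longrightarrow> g \<in> Ar C \<Longrightarrow> h \<in> Ar C \<Longrightarrow> tg C f = sr C g \<Longrightarrow> tg C g = sr C h \<Longrightarrow>
    c1 C (c1 C h g) f = c1 C h (c1 C g f)"
  using two_category unfolding two_category_def by (elim conjE) (blast intro: sym)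

lemma i2_typing: "f \<in> Ar C \<Longrightarrow> i2 C f \<in> Ce C \<and> dm C (i2 C f) = f \<and> cd C (i2 C f) = f"
  using two_category unfolding two_category_def by (elim conjE) blast

lemma vc_typing:
  "a \<in> Ce C \<Longrightarrow> b \<in> Ce C \<Longrightarrow> dm C b = cd C a \<Longrightarrow>
    vc C b a \<in> Ce C \<and> dm C (vc C b a) = dm C a \<and> cd C (vc C b a) = cd C b"
  using two_category unfolding two_category_def by (elim conjE) blast

lemma vc_assoc [simp]:
  "a \<in> Ce C \<Longrightarrow> b \<in> Ce C \<Longrightarrow> c \<in> Ce C \<Longrightarrow> dm C b = cd C a \<Longrightarrow> dm C c = cd C b \<Longrightarrow>
    vc C (vc C c b) a = vc C c (vc C b a)"
  using two_category unfolding two_category_def by (elim conjE) (blast intro: sym)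

lemma vc_i2: "a \<in> Ce C \<Longrightarrow> vc C a (i2 C (dm C a)) = a \<and> vc C (i2 C (cd C a)) a = a"
  using two_category unfolding two_category_def by (elim conjE) blast

lemma sr_Ob [simp]: "f \<in> Ar C \<Longrightarrow> sr C f \<in> Ob C"
  and tg_Ob [simp]: "f \<in> Ar C \<Longrightarrow> tg C f \<in> Ob C"
  by (simp_all add: arrow_boundary)

lemma dm_Ar [simp]: "a \<in> Ce C \<Longrightarrow> dm C a \<in> Ar C"
  and cd_Ar [simp]: "a \<in> Ce C \<Longrightarrow> cd C a \<in> Ar C"
  and sr_cd [simp]: "a \<in> Ce C \<Longrightarrow> sr C (cd C a) = sr C (dm C a)"
  and tg_cd [simp]: "a \<in> Ce C \<Longrightarrow> tg C (cd C a) = tg C (dm C a)"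
  by (simp_all add: cell_boundary)

lemma c1_Ar [simp]: "f \<in> Ar C \<Longrightarrow> g \<in> Ar C \<Longrightarrow> tg C f = sr C g \<Longrightarrow> c1 C g f \<in> Ar C"
  and sr_c1 [simp]: "f \<in> Ar C \<Longrightarrow> g \<in> Ar C \<Longrightarrow> tg C f = sr C g \<Longrightarrow> sr C (c1 C g f) = sr C f"
  and tg_c1 [simp]: "f \<in> Ar C \<Longrightarrow> g \<in> Ar C \<Longrightarrow> tg C f = sr C g \<Longrightarrow> tg C (c1 C g f) = tg C g"
  by (simp_all add: c1_typing)

lemma i2_Ce [simp]: "f \<in> Ar C \<Longrightarrow> i2 C f \<in> Ce C"
  and dm_i2 [simp]: "f \<in> Ar C \<Longrightarrow> dm C (i2 C f) = f"
  and cd_i2 [simp]: "f \<in> Ar C \<Longrightarrow> cd C (i2 C f) = f"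
  by (simp_all add: i2_typing)

lemma vc_Ce [simp]: "a \<in> Ce C \<Longrightarrow> b \<in> Ce C \<Longrightarrow> dm C b = cd C a \<Longrightarrow> vc C b a \<in> Ce C"
  and dm_vc [simp]: "a \<in> Ce C \<Longrightarrow> b \<in> Ce C \<Longrightarrow> dm C b = cd C a \<Longrightarrow> dm C (vc C b a) = dm C a"
  and cd_vc [simp]: "a \<in> Ce C \<Longrightarrow> b \<in> Ce C \<Longrightarrow> dm C b = cd C a \<Longrightarrow> cd C (vc C b a) = cd C b"
  by (simp_all add: vc_typing)

lemma vc_i2_right [simp]: "a \<in> Ce C \<Longrightarrow> dm C a = f \<Longrightarrow> vc C a (i2 C f) = a"
  and vc_i2_left [simp]: "a \<in> Ce C \<Longrightarrow> cd C a = f \<Longrightarrow> vc C (i2 C f) a = a"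
  using vc_i2 by blast+

lemma i1_typing: "x \<in> Ob C \<Longrightarrow> i1 C x \<in> Ar C \<and> sr C (i1 C x) = x \<and> tg C (i1 C x) = x"
  using two_category unfolding two_category_def by (elim conjE) blast

lemma i1_Ar [simp]: "x \<in> Ob C \<Longrightarrow> i1 C x \<in> Ar C"
  and sr_i1 [simp]: "x \<in> Ob C \<Longrightarrow> sr C (i1 C x) = x"
  and tg_i1 [simp]: "x \<in> Ob C \<Longrightarrow> tg C (i1 C x) = x"
  by (simp_all add: i1_typing)

lemma c1_i1: "f \<in> Ar C \<Longrightarrow> c1 C f (i1 C (sr C f)) = f \<and> c1 C (i1 C (tg C f)) f = f"
  using two_category unfolding two_category_def by (elim conjE) blast

lemma c1_i1_right [simp]: "f \<in> Ar C \<Longrightarrow> sr C f = x \<Longrightarrow> c1 C f (i1 C x) = f"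
  and c1_i1_left [simp]: "f \<in> Ar C \<Longrightarrow> tg C f = x \<Longrightarrow> c1 C (i1 C x) f = f"
  using c1_i1 by blast+

lemma hc_i2_i1: "a \<in> Ce C \<Longrightarrow> hc C a (i2 C (i1 C (sr C (dm C a)))) = a \<and> hc C (i2 C (i1 C (tg C (dm C a)))) a = a"
  using two_category unfolding two_category_def by (elim conjE) simp

lemma hc_typing:
  "a \<in> Ce C \<Longrightarrow> b \<in> Ce C \<Longrightarrow> tg C (dm C a) = sr C (dm C b) \<Longrightarrow>
    hc C b a \<in> Ce C \<and> dm C (hc C b a) = c1 C (dm C b) (dm C a) \<and> cd C (hc C b a) = c1 C (cd C b) (cd C a)"
  using two_category unfolding two_category_def by (elim conjE) blast

lemma hc_assoc:
  "a \<in> Ce C \<Longrightarrow> b \<in> Ce C \<Longrightarrow> c \<in> Ce C \<Longrightarrow> tg C (dm C a) = sr C (dm C b) \<Longrightarrow>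
    tg C (dm C b) = sr C (dm C c) \<Longrightarrow> hc C c (hc C b a) = hc C (hc C c b) a"
  using two_category unfolding two_category_def by blast

lemma hc_i2: "f \<in> Ar C \<Longrightarrow> g \<in> Ar C \<Longrightarrow> tg C f = sr C g \<Longrightarrow> hc C (i2 C g) (i2 C f) = i2 C (c1 C g f)"
  using two_category unfolding two_category_def by (elim conjE) simp

lemma interchange:
  "a \<in> Ce C \<Longrightarrow> a' \<in> Ce C \<Longrightarrow> b \<in> Ce C \<Longrightarrow> b' \<in> Ce C \<Longrightarrow>
    dm C a' = cd C a \<Longrightarrow> dm C b' = cd C b \<Longrightarrow> tg C (dm C a) = sr C (dm C b) \<Longrightarrow>
    hc C (vc C b' b) (vc C a' a) = vc C (hc C b' a') (hc C b a)"
  using two_category unfolding two_category_def by blast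

lemma lw_Ce [simp]: "a \<in> Ce C \<Longrightarrow> g \<in> Ar C \<Longrightarrow> tg C (dm C a) = sr C g \<Longrightarrow> lw C g a \<in> Ce C"
  and dm_lw [simp]: "a \<in> Ce C \<Longrightarrow> g \<in> Ar C \<Longrightarrow> tg C (dm C a) = sr C g \<Longrightarrow> dm C (lw C g a) = c1 C g (dm C a)"
  and cd_lw [simp]: "a \<in> Ce C \<Longrightarrow> g \<in> Ar C \<Longrightarrow> tg C (dm C a) = sr C g \<Longrightarrow> cd C (lw C g a) = c1 C g (cd C a)"
  unfolding lw_def using hc_typing[of a "i2 C g"] by simp_all

lemma rw_Ce [simp]: "a \<in> Ce C \<Longrightarrow> f \<in> Ar C \<Longrightarrow> tg C f = sr C (dm C a) \<Longrightarrow> rw C a f \<in> Ce C"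
  and dm_rw [simp]: "a \<in> Ce C \<Longrightarrow> f \<in> Ar C \<Longrightarrow> tg C f = sr C (dm C a) \<Longrightarrow> dm C (rw C a f) = c1 C (dm C a) f"
  and cd_rw [simp]: "a \<in> Ce C \<Longrightarrow> f \<in> Ar C \<Longrightarrow> tg C f = sr C (dm C a) \<Longrightarrow> cd C (rw C a f) = c1 C (cd C a) f"
  unfolding rw_def using hc_typing[of "i2 C f" a] by simp_all

lemma lw_vc:
  "a \<in> Ce C \<Longrightarrow> b \<in> Ce C \<Longrightarrow> dm C b = cd C a \<Longrightarrow> g \<in> Ar C \<Longrightarrow> tg C (dm C a) = sr C g \<Longrightarrow>
    lw C g (vc C b a) = vc C (lw C g b) (lw C g a)"
  unfolding lw_def using interchange[of a b "i2 C g" "i2 C g"] by simp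

lemma rw_vc:
  "a \<in> Ce C \<Longrightarrow> b \<in> Ce C \<Longrightarrow> dm C b = cd C a \<Longrightarrow> f \<in> Ar C \<Longrightarrow> tg C f = sr C (dm C a) \<Longrightarrow>
    rw C (vc C b a) f = vc C (rw C b f) (rw C a f)"
  unfolding rw_def using interchange[of "i2 C f" "i2 C f" a b] by simp

lemma lw_lw:
  "a \<in> Ce C \<Longrightarrow> g \<in> Ar C \<Longrightarrow> h \<in> Ar C \<Longrightarrow> tg C (dm C a) = sr C h \<Longrightarrow> tg C h = sr C g \<Longrightarrow>
    lw C g (lw C h a) = lw C (c1 C g h) a"
  unfolding lw_def using hc_assoc[of a "i2 C h" "i2 C g"] hc_i2[of h g] by simp

lemma rw_rw:
  "a \<in> Ce C \<Longrightarrow> f \<in> Ar C \<Longrightarrow> h \<in> Ar C \<Longrightarrow> tg C f = sr C (dm C a) \<Longrightarrow> tg C h = sr C f \<Longrightarrow>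
    rw C (rw C a f) h = rw C a (c1 C f h)"
  unfolding rw_def using hc_assoc[of "i2 C h" "i2 C f" a] hc_i2[of h f] by simp

lemma lw_rw:
  "a \<in> Ce C \<Longrightarrow> f \<in> Ar C \<Longrightarrow> g \<in> Ar C \<Longrightarrow> tg C f = sr C (dm C a) \<Longrightarrow> tg C (dm C a) = sr C g \<Longrightarrow>
    lw C g (rw C a f) = rw C (lw C g a) f"
  unfolding rw_def lw_def using hc_assoc[of "i2 C f" a "i2 C g"] by simp

lemma rw_i2: "f \<in> Ar C \<Longrightarrow> g \<in> Ar C \<Longrightarrow> tg C f = sr C g \<Longrightarrow> rw C (i2 C g) f = i2 C (c1 C g f)"
  unfolding rw_def by (rule hc_i2)

lemma lw_i1: "a \<in> Ce C \<Longrightarrow> tg C (dm C a) = x \<Longrightarrow> lw C (i1 C x) a = a"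
  unfolding lw_def using hc_i2_i1 by blast

lemmas whisker_simps = lw_vc rw_vc lw_lw rw_rw lw_rw rw_i2 lw_i1

lemma hc_eq_whiskers:
  assumes "a \<in> Ce C" "b \<in> Ce C" "tg C (dm C a) = sr C (dm C b)"
  shows "hc C b a = vc C (lw C (cd C b) a) (rw C b (dm C a))"
    and "hc C b a = vc C (rw C b (cd C a)) (lw C (dm C b) a)"
proof -
  have "hc C b a = hc C (vc C (i2 C (cd C b)) b) (vc C a (i2 C (dm C a)))"
    using assms by simp
  also have "\<dots> = vc C (lw C (cd C b) a) (rw C b (dm C a))"
    unfolding lw_def rw_def using assms by (intro interchange) simp_all
  finally show "hc C b a = vc C (lw C (cd C b) a) (rw C b (dm C a))" .
  have "hc C b a = hc C (vc C b (i2 C (dm C b))) (vc C (i2 C (cd C a)) a)"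
    using assms by simp
  also have "\<dots> = vc C (rw C b (cd C a)) (lw C (dm C b) a)"
    unfolding lw_def rw_def using assms by (intro interchange) simp_all
  finally show "hc C b a = vc C (rw C b (cd C a)) (lw C (dm C b) a)" .
qed

lemma whisker_interchange:
  "a \<in> Ce C \<Longrightarrow> b \<in> Ce C \<Longrightarrow> tg C (dm C a) = sr C (dm C b) \<Longrightarrow>
    vc C (lw C (cd C b) a) (rw C b (dm C a)) = vc C (rw C b (cd C a)) (lw C (dm C b) a)"
  using hc_eq_whiskers by metis

text \<open>Lets simp use an equation between two-step composites inside right-nested composites.\<close>

lemma vc_eq_prefix:
  "vc C b a = c \<Longrightarrow> a \<in> Ce C \<Longrightarrow> b \<in> Ce C \<Longrightarrow> dm C b = cd C a \<Longrightarrow> r \<in> Ce C \<Longrightarrow> dm C a = cd C r \<Longrightarrow>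
    vc C b (vc C a r) = vc C c r"
  by (simp flip: vc_assoc)

lemma EMw_1cell_action_assoc:
  assumes V\<psi>: "EMw_1cell C k t \<mu> \<eta> k' t' \<mu>' \<eta>' V \<psi>"
    and A\<alpha>: "EM_1cell_from_id C l k t \<mu> \<eta> A \<alpha>"
  defines "\<theta> \<equiv> vc C (lw C V \<alpha>) (rw C \<psi> A)"
  shows "vc C \<theta> (lw C t' \<theta>) = vc C \<theta> (rw C \<mu>' (c1 C V A))"
proof -
  have typing: "t \<in> Ar C" "sr C t = k" "tg C t = k" "t' \<in> Ar C" "sr C t' = k'" "tg C t' = k'"
    "V \<in> Ar C" "sr C V = k" "tg C V = k'" "A \<in> Ar C" "sr C A = l" "tg C A = k"
    "\<mu> \<in> Ce C" "dm C \<mu> = c1 C t t" "cd C \<mu> = t"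
    "\<mu>' \<in> Ce C" "dm C \<mu>' = c1 C t' t'" "cd C \<mu>' = t'"
    "\<psi> \<in> Ce C" "dm C \<psi> = c1 C t' V" "cd C \<psi> = c1 C V t"
    "\<alpha> \<in> Ce C" "dm C \<alpha> = c1 C t A" "cd C \<alpha> = A"
    using V\<psi> A\<alpha> unfolding EMw_1cell_def EM_1cell_from_id_def is_monad_def hom1_def hom2_def
    by auto
  have \<psi>_law: "vc C (lw C V \<mu>) (vc C (rw C \<psi> t) (lw C t' \<psi>)) = vc C \<psi> (rw C \<mu>' V)"
    using V\<psi> unfolding EMw_1cell_def by blast
  have \<alpha>_assoc: "vc C \<alpha> (lw C t \<alpha>) = vc C \<alpha> (rw C \<mu> A)"
    using A\<alpha> unfolding EM_1cell_from_id_def by blast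
  have \<psi>_natural: "vc C (rw C \<psi> A) (lw C (c1 C t' V) \<alpha>) = vc C (lw C (c1 C V t) \<alpha>) (rw C \<psi> (c1 C t A))"
    using whisker_interchange[of \<alpha> \<psi>] typing by simp
  have V\<alpha>_assoc: "vc C (lw C V \<alpha>) (lw C (c1 C V t) \<alpha>) = vc C (lw C V \<alpha>) (rw C (lw C V \<mu>) A)"
    using arg_cong[OF \<alpha>_assoc, of "lw C V"] typing by (simp add: whisker_simps)
  have \<psi>_law_whiskered: "vc C (rw C (lw C V \<mu>) A) (vc C (rw C \<psi> (c1 C t A)) (rw C (lw C t' \<psi>) A))
      = vc C (rw C \<psi> A) (rw C \<mu>' (c1 C V A))"
    using arg_cong[OF \<psi>_law, of "\<lambda>x. rw C x A"] typing by (simp add: whisker_simps)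
  have "vc C \<theta> (lw C t' \<theta>)
      = vc C (lw C V \<alpha>) (vc C (rw C \<psi> A) (vc C (lw C (c1 C t' V) \<alpha>) (rw C (lw C t' \<psi>) A)))"
    unfolding \<theta>_def using typing by (simp add: whisker_simps)
  also have "\<dots> = vc C (lw C V \<alpha>) (vc C (lw C (c1 C V t) \<alpha>) (vc C (rw C \<psi> (c1 C t A)) (rw C (lw C t' \<psi>) A)))"
    using typing by (simp add: vc_eq_prefix[OF \<psi>_natural])
  also have "\<dots> = vc C (lw C V \<alpha>) (vc C (rw C (lw C V \<mu>) A) (vc C (rw C \<psi> (c1 C t A)) (rw C (lw C t' \<psi>) A)))"
    using typing by (simp add: vc_eq_prefix[OF V\<alpha>_assoc])
  also have "\<dots> = vc C \<theta> (rw C \<mu>' (c1 C V A))"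
    unfolding \<theta>_def using typing by (simp add: \<psi>_law_whiskered)
  finally show ?thesis .
qed

end

locale action_splitting = two_cat +
  fixes k t \<mu> \<eta> l X \<theta> Xh \<iota> \<pi>
  assumes monad: "is_monad C k t \<mu> \<eta>" and l_Ob: "l \<in> Ob C" and X: "hom1 C X l k"
    and \<theta>: "hom2 C \<theta> (c1 C t X) X"
    and \<theta>_assoc: "vc C \<theta> (lw C t \<theta>) = vc C \<theta> (rw C \<mu> X)"
    and split: "splits_idempotent C (vc C \<theta> (rw C \<eta> X)) Xh \<iota> \<pi>"
begin

lemma typing:
  "k \<in> Ob C" "t \<in> Ar C" "sr C t = k" "tg C t = k" "X \<in> Ar C" "sr C X = l" "tg C X = k"
  "\<mu> \<in> Ce C" "dm C \<mu> = c1 C t t" "cd C \<mu> = t" "\<eta> \<in> Ce C" "dm C \<eta> = i1 C k" "cd C \<eta> = t"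
  "\<theta> \<in> Ce C" "dm C \<theta> = c1 C t X" "cd C \<theta> = X"
  using monad X \<theta> unfolding is_monad_def hom1_def hom2_def by blast+

lemma split_typing:
  "Xh \<in> Ar C" "\<iota> \<in> Ce C" "dm C \<iota> = Xh" "cd C \<iota> = X" "\<pi> \<in> Ce C" "dm C \<pi> = X" "cd C \<pi> = Xh"
  "sr C Xh = l" "tg C Xh = k"
proof -
  show \<iota>\<pi>: "Xh \<in> Ar C" "\<iota> \<in> Ce C" "dm C \<iota> = Xh" "cd C \<iota> = X"
    "\<pi> \<in> Ce C" "dm C \<pi> = X" "cd C \<pi> = Xh"
    using split typing unfolding splits_idempotent_def hom2_def by simp_all
  then show "sr C Xh = l" "tg C Xh = k"
    using cell_boundary[of \<iota>] typing by auto
qed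

lemma retract: "vc C \<pi> \<iota> = i2 C Xh"
  and idempotent: "vc C \<iota> \<pi> = vc C \<theta> (rw C \<eta> X)"
  using split unfolding splits_idempotent_def by blast+

lemma split_action_unit: "vc C (vc C \<pi> (vc C \<theta> (lw C t \<iota>))) (rw C \<eta> Xh) = i2 C Xh"
proof -
  have \<eta>_natural: "vc C (lw C t \<iota>) (rw C \<eta> Xh) = vc C (rw C \<eta> X) \<iota>"
    using whisker_interchange[of \<iota> \<eta>] typing split_typing by (simp add: lw_i1)
  have "vc C (vc C \<pi> (vc C \<theta> (lw C t \<iota>))) (rw C \<eta> Xh) = vc C \<pi> (vc C (vc C \<theta> (rw C \<eta> X)) \<iota>)"
    using typing split_typing by (simp add: \<eta>_natural)
  also have "\<dots> = vc C \<pi> (vc C (vc C \<iota> \<pi>) \<iota>)"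
    by (simp only: idempotent)
  also have "\<dots> = i2 C Xh"
    using split_typing by (simp add: vc_eq_prefix[OF retract] retract)
  finally show ?thesis .
qed

lemma split_action_assoc:
  "vc C (vc C \<pi> (vc C \<theta> (lw C t \<iota>))) (lw C t (vc C \<pi> (vc C \<theta> (lw C t \<iota>))))
    = vc C (vc C \<pi> (vc C \<theta> (lw C t \<iota>))) (rw C \<mu> Xh)"
proof -
  note types = typing split_typing
  have unit_law: "vc C \<mu> (lw C t \<eta>) = i2 C t"
    using monad unfolding is_monad_def by blast
  have unit_lawX: "vc C (rw C \<mu> X) (rw C (lw C t \<eta>) X) = i2 C (c1 C t X)"
    using arg_cong[OF unit_law, of "\<lambda>x. rw C x X"] types by (simp add: whisker_simps)
  have \<mu>_natural: "vc C (rw C \<mu> X) (lw C (c1 C t t) \<iota>) = vc C (lw C t \<iota>) (rw C \<mu> Xh)"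
    using whisker_interchange[of \<iota> \<mu>] types by simp
  have t_idempotent: "vc C (lw C t \<iota>) (lw C t \<pi>) = vc C (lw C t \<theta>) (rw C (lw C t \<eta>) X)"
    using arg_cong[OF idempotent, of "lw C t"] types by (simp add: whisker_simps)
  have "vc C (vc C \<pi> (vc C \<theta> (lw C t \<iota>))) (lw C t (vc C \<pi> (vc C \<theta> (lw C t \<iota>))))
      = vc C \<pi> (vc C \<theta> (vc C (lw C t \<theta>) (vc C (rw C (lw C t \<eta>) X)
          (vc C (lw C t \<theta>) (lw C (c1 C t t) \<iota>)))))"
    using types by (simp add: whisker_simps vc_eq_prefix[OF t_idempotent])
  also have "\<dots> = vc C \<pi> (vc C \<theta> (vc C (lw C t \<theta>) (lw C (c1 C t t) \<iota>)))"
    using types by (simp add: vc_eq_prefix[OF \<theta>_assoc] vc_eq_prefix[OF unit_lawX])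
  also have "\<dots> = vc C (vc C \<pi> (vc C \<theta> (lw C t \<iota>))) (rw C \<mu> Xh)"
    using types by (simp add: vc_eq_prefix[OF \<theta>_assoc] \<mu>_natural)
  finally show ?thesis .
qed

lemma EM_1cell_from_id_split_action:
  "EM_1cell_from_id C l k t \<mu> \<eta> Xh (vc C \<pi> (vc C \<theta> (lw C t \<iota>)))"
  unfolding EM_1cell_from_id_def hom1_def hom2_def
  using l_Ob monad typing split_typing split_action_unit split_action_assoc by simp

end

theorem lemma3p3:
  fixes C :: "('o, 'a, 'c, 'm) twocat_scheme"
  assumes "two_category C"
    and "admits_EM C"
    and "idempotents_split C"
    and "EMw_1cell C k t \<mu> \<eta> k' t' \<mu>' \<eta>' V \<psi>"
    and "EM_data C k t \<mu> \<eta> E f v \<epsilon>"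
    and "splits_idempotent C
           (vc C (lw C (c1 C V v) \<epsilon>) (vc C (rw C \<psi> v) (rw C \<eta>' (c1 C V v))))
           Vt \<iota> \<pi>"
  shows "EM_1cell_from_id C E k' t' \<mu>' \<eta>' Vt
           (vc C \<pi> (vc C (lw C (c1 C V v) \<epsilon>) (vc C (rw C \<psi> v) (lw C t' \<iota>))))"
proof -
  interpret two_cat C by (rule two_cat.intro) (fact assms(1))
  have v_algebra: "EM_1cell_from_id C E k t \<mu> \<eta> v (lw C v \<epsilon>)"
    using assms(5) unfolding EM_data_def is_EM_object_def by blast
  have types: "E \<in> Ob C" "k' \<in> Ob C" "t' \<in> Ar C" "sr C t' = k'" "tg C t' = k'" "\<eta>' \<in> Ce C"
    "dm C \<eta>' = i1 C k'" "cd C \<eta>' = t'" "V \<in> Ar C" "sr C V = k" "tg C V = k'"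
    "\<psi> \<in> Ce C" "dm C \<psi> = c1 C t' V" "cd C \<psi> = c1 C V t"
    "v \<in> Ar C" "sr C v = E" "tg C v = k" "\<epsilon> \<in> Ce C" "dm C \<epsilon> = c1 C f v" "cd C \<epsilon> = i1 C E"
    "f \<in> Ar C" "sr C f = k" "tg C f = E" "t = c1 C v f"
    using assms(4,5) v_algebra
    unfolding EMw_1cell_def EM_data_def EM_1cell_from_id_def is_monad_def hom1_def hom2_def
    by auto
  define \<theta> where "\<theta> = vc C (lw C (c1 C V v) \<epsilon>) (rw C \<psi> v)"
  have \<theta>_induced: "\<theta> = vc C (lw C V (lw C v \<epsilon>)) (rw C \<psi> v)"
    unfolding \<theta>_def using types by (simp add: lw_lw)
  interpret action_splitting C k' t' \<mu>' \<eta>' E "c1 C V v" \<theta> Vt \<iota> \<pi>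
  proof
    show "is_monad C k' t' \<mu>' \<eta>'"
      using assms(4) unfolding EMw_1cell_def by blast
    show "vc C \<theta> (lw C t' \<theta>) = vc C \<theta> (rw C \<mu>' (c1 C V v))"
      unfolding \<theta>_induced by (rule EMw_1cell_action_assoc[OF assms(4) v_algebra])
    show "splits_idempotent C (vc C \<theta> (rw C \<eta>' (c1 C V v))) Vt \<iota> \<pi>"
      using assms(6) types unfolding \<theta>_def by simp
  qed (use types in \<open>simp_all add: \<theta>_def hom1_def hom2_def\<close>)
  have "vc C \<theta> (lw C t' \<iota>) = vc C (lw C (c1 C V v) \<epsilon>) (vc C (rw C \<psi> v) (lw C t' \<iota>))"
    unfolding \<theta>_def using types split_typing by simp
  then show ?thesis
    using EM_1cell_from_id_split_action by simp
qed

end
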